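(* Let $$D=\{(t_1,\dots,t_n)\in\mathbb{R}^n_{>0}: t_1^2\leq t_2,\ t_j^2\leq t_{j-1}t_{j+1}\text{ for all } j=2,\dots,n-1\}$$ and let $f:\mathbb{R}^n_{>0}\to\mathbb{R}$ be $f(t_1,\dots,t_n)=\frac{1}{t_1}+\frac{t_1}{t_2}+\cdots+\frac{t_{n-1}}{t_n}$. Let $a=(a_1,\dots,a_n),b=(b_1,\dots,b_n)\in D$ with $a_i\leq b_i$ for all $i=1,\dots,n$. Then $f(a)\geq f(b)$, and equality holds if and only if $a=b$. *)

theory Defs
  imports Complex_Main
begin

text \<open>Points of R^n are represented as functions nat => real, using coordinates 1..n.\<close>

definition D :: "nat \<Rightarrow> (nat \<Rightarrow> real) set" where
  "D n = {t. (\<forall>i\<in>{1..n}. t i > 0) \<and> (t 1)^2 \<le> t 2 \<and>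
             (\<forall>j\<in>{2..n-1}. (t j)^2 \<le> t (j-1) * t (j+1))}"

definition f :: "nat \<Rightarrow> (nat \<Rightarrow> real) \<Rightarrow> real" where
  "f n t = 1 / t 1 + (\<Sum>i=2..n. t (i-1) / t i)"

end

theory Submission
  imports Defs
begin

text \<open>Put \<open>a(0) = b(0) = 1\<close>, \<open>\<rho>(j) = b(j-1) / b(j)\<close> and \<open>u(j) = a(j) / b(j) \<le> 1\<close>. By
  \<open>ln x \<le> x - 1\<close>,
  \<open>f(a) - f(b) = \<Sum>\<^sub>j \<rho>(j) (u(j-1) / u(j) - 1) \<ge> \<Sum>\<^sub>j \<rho>(j) (S(j) - S(j-1))\<close>
  where \<open>S = -ln u \<ge> 0\<close> and \<open>S(0) = 0\<close>. Log-convexity of \<open>b\<close> says exactly that \<open>\<rho>\<close> is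
  non-increasing, so summation by parts bounds the right-hand side below by \<open>\<rho>(n) S(n) \<ge> 0\<close>.
  Equality forces \<open>u(j-1) = u(j)\<close> for all \<open>j\<close>, i.e. \<open>a = b\<close>.\<close>

lemma weighted_increments_ge_last:
  fixes c S :: "nat \<Rightarrow> real"
  assumes "S 0 = 0" "\<forall>k\<le>n. S k \<ge> 0" "\<forall>k\<in>{1..<n}. c (k+1) \<le> c k"
    and "m \<le> n"
  shows "c m * S m \<le> (\<Sum>j=1..m. c j * (S j - S (j-1)))"
  using \<open>m \<le> n\<close>
proof (induction m)
  case 0
  then show ?case using assms(1) by simp
next
  case (Suc m)
  have "(c m - c (Suc m)) * S m \<ge> 0"
    using assms Suc.prems by (cases "m = 0") (auto intro: mult_nonneg_nonneg)
  then show ?case using Suc by (simp add: algebra_simps)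
qed

lemma weighted_increments_nonneg:
  fixes c S :: "nat \<Rightarrow> real"
  assumes "S 0 = 0" "\<forall>k\<le>n. S k \<ge> 0" "\<forall>k\<in>{1..<n}. c (k+1) \<le> c k" "\<forall>k\<in>{1..n}. c k \<ge> 0"
  shows "(\<Sum>j=1..n. c j * (S j - S (j-1))) \<ge> 0"
proof -
  have "c n * S n \<ge> 0"
    using assms by (cases "n = 0") (auto intro: mult_nonneg_nonneg)
  then show ?thesis using weighted_increments_ge_last[OF assms(1-3) order_refl] by linarith
qed

lemma weighted_ratio_sum_ge_gaps:
  fixes \<rho> u :: "nat \<Rightarrow> real"
  assumes "u 0 = 1" and u: "\<forall>j\<le>n. 0 < u j \<and> u j \<le> 1"
    and "\<forall>j\<in>{1..n}. \<rho> j \<ge> 0" and "\<forall>k\<in>{1..<n}. \<rho> (k+1) \<le> \<rho> k"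
  shows "(\<Sum>j=1..n. \<rho> j * (u (j-1) / u j - 1 - ln (u (j-1) / u j)))
    \<le> (\<Sum>j=1..n. \<rho> j * (u (j-1) / u j - 1))"
proof -
  define S where "S j = - ln (u j)" for j
  have ln_quot: "ln (u (j-1) / u j) = S j - S (j-1)" if "j \<in> {1..n}" for j
  proof -
    have "u (j-1) > 0" "u j > 0" using u that by auto
    then show ?thesis unfolding S_def by (simp add: ln_div)
  qed
  have "(\<Sum>j=1..n. \<rho> j * (u (j-1) / u j - 1))
      = (\<Sum>j=1..n. \<rho> j * (u (j-1) / u j - 1 - ln (u (j-1) / u j)))
        + (\<Sum>j=1..n. \<rho> j * (S j - S (j-1)))"
    unfolding sum.distrib[symmetric]
  proof (rule sum.cong[OF refl])
    fix j assume "j \<in> {1..n}"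
    then show "\<rho> j * (u (j-1) / u j - 1)
        = \<rho> j * (u (j-1) / u j - 1 - ln (u (j-1) / u j)) + \<rho> j * (S j - S (j-1))"
      by (simp only: ln_quot) (simp add: algebra_simps)
  qed
  moreover have "(\<Sum>j=1..n. \<rho> j * (S j - S (j-1))) \<ge> 0"
    using assms unfolding S_def by (intro weighted_increments_nonneg) auto
  ultimately show ?thesis by linarith
qed

lemma weighted_ratio_sum_nonneg:
  fixes \<rho> u :: "nat \<Rightarrow> real"
  assumes u0: "u 0 = 1" and u: "\<forall>j\<le>n. 0 < u j \<and> u j \<le> 1"
    and \<rho>_pos: "\<forall>j\<in>{1..n}. \<rho> j > 0" and \<rho>_antimono: "\<forall>k\<in>{1..<n}. \<rho> (k+1) \<le> \<rho> k"
  shows "(\<Sum>j=1..n. \<rho> j * (u (j-1) / u j - 1)) \<ge> 0"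
    and "(\<Sum>j=1..n. \<rho> j * (u (j-1) / u j - 1)) = 0 \<longleftrightarrow> (\<forall>j\<in>{1..n}. u j = 1)"
proof -
  define x where "x j = u (j-1) / u j" for j
  define gap where "gap j = \<rho> j * (x j - 1 - ln (x j))" for j
  have x_pos: "x j > 0" if "j \<in> {1..n}" for j
    using u that unfolding x_def by auto
  have gap_nonneg: "gap j \<ge> 0" if "j \<in> {1..n}" for j
  proof -
    have "\<rho> j > 0" using \<rho>_pos that by blast
    then show ?thesis using ln_le_minus_one[OF x_pos[OF that]] unfolding gap_def by simp
  qed
  have gaps: "sum gap {1..n} \<ge> 0" using gap_nonneg by (intro sum_nonneg) blast
  have gaps_le: "sum gap {1..n} \<le> (\<Sum>j=1..n. \<rho> j * (x j - 1))"
    using weighted_ratio_sum_ge_gaps[OF u0 u _ \<rho>_antimono] \<rho>_pos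
    unfolding gap_def x_def by (simp add: less_imp_le)
  show "(\<Sum>j=1..n. \<rho> j * (u (j-1) / u j - 1)) \<ge> 0"
    using gaps gaps_le unfolding x_def by linarith
  show "(\<Sum>j=1..n. \<rho> j * (u (j-1) / u j - 1)) = 0 \<longleftrightarrow> (\<forall>j\<in>{1..n}. u j = 1)"
  proof
    assume "(\<Sum>j=1..n. \<rho> j * (u (j-1) / u j - 1)) = 0"
    then have "sum gap {1..n} = 0" using gaps gaps_le unfolding x_def by linarith
    then have "\<forall>j\<in>{1..n}. gap j = 0" using gap_nonneg sum_nonneg_eq_0_iff[of "{1..n}" gap] by auto
    then have x1: "x j = 1" if "j \<in> {1..n}" for j
      using ln_eq_minus_one[OF x_pos[OF that]] \<rho>_pos that unfolding gap_def by fastforce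
    have "u j = 1" if "j \<le> n" for j
      using that
    proof (induction j)
      case 0
      then show ?case using u0 by simp
    next
      case (Suc j)
      then show ?case using x1[of "Suc j"] u unfolding x_def by auto
    qed
    then show "\<forall>j\<in>{1..n}. u j = 1" by simp
  next
    assume all_one: "\<forall>j\<in>{1..n}. u j = 1"
    have "u j = 1" if "j \<le> n" for j
      using u0 all_one that by (cases j) auto
    then show "(\<Sum>j=1..n. \<rho> j * (u (j-1) / u j - 1)) = 0"
      by (intro sum.neutral) auto
  qed
qed

definition ratio :: "(nat \<Rightarrow> real) \<Rightarrow> nat \<Rightarrow> real" where
  "ratio t j = (t(0 := 1)) (j-1) / (t(0 := 1)) j"

lemma f_eq_sum_ratio:
  assumes "n \<ge> 1"
  shows "f n t = (\<Sum>j=1..n. ratio t j)"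
proof -
  have "{1..n} = insert 1 {2..n}" using assms by auto
  then have "(\<Sum>j=1..n. ratio t j) = ratio t 1 + (\<Sum>j=2..n. ratio t j)"
    by simp
  also have "(\<Sum>j=2..n. ratio t j) = (\<Sum>j=2..n. t (j-1) / t j)"
    by (intro sum.cong) (auto simp: ratio_def)
  finally show ?thesis unfolding f_def by (simp add: ratio_def)
qed

lemma fun_upd_zero_one_pos:
  fixes t :: "nat \<Rightarrow> real"
  assumes "\<forall>j\<in>{1..n}. t j > 0" "j \<le> n"
  shows "(t(0 := 1)) j > 0"
  using assms by (cases j) auto

lemma f_diff_eq_weighted_ratio_sum:
  fixes a b :: "nat \<Rightarrow> real"
  defines "u \<equiv> \<lambda>j. (a(0 := 1)) j / (b(0 := 1)) j"
  assumes "n \<ge> 1" and pos: "\<forall>j\<in>{1..n}. a j > 0 \<and> b j > 0"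
  shows "f n a - f n b = (\<Sum>j=1..n. ratio b j * (u (j-1) / u j - 1))"
proof -
  have "ratio a j - ratio b j = ratio b j * (u (j-1) / u j - 1)" if "j \<in> {1..n}" for j
  proof -
    have "(a(0 := 1)) (j-1) > 0" "(b(0 := 1)) (j-1) > 0" "a j > 0" "b j > 0"
      using pos that fun_upd_zero_one_pos[of n a "j-1"] fun_upd_zero_one_pos[of n b "j-1"] by auto
    with that show ?thesis unfolding ratio_def u_def by (simp add: field_simps)
  qed
  then show ?thesis
    using \<open>n \<ge> 1\<close> by (simp add: f_eq_sum_ratio sum_subtractf[symmetric])
qed

lemma D_pos: "t \<in> D n \<Longrightarrow> \<forall>j\<in>{1..n}. t j > 0"
  unfolding D_def by auto

lemma D_ratio_pos:
  assumes "t \<in> D n" "j \<in> {1..n}"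
  shows "ratio t j > 0"
proof -
  have "(t(0 := 1)) (j-1) > 0" "t j > 0"
    using assms D_pos[OF assms(1)] fun_upd_zero_one_pos[of n t "j-1"] by auto
  with assms(2) show ?thesis unfolding ratio_def by simp
qed

lemma D_ratio_antimono:
  assumes "t \<in> D n" "k \<in> {1..<n}"
  shows "ratio t (k+1) \<le> ratio t k"
proof -
  have ratio_le: "q / r \<le> p / q" if "q > 0" "r > 0" "q\<^sup>2 \<le> p * r" for p q r :: real
    using that by (simp add: field_simps power2_eq_square)
  have "(t(0 := 1)) (k-1) > 0" "t k > 0" "t (k+1) > 0"
    using assms D_pos[OF assms(1)] fun_upd_zero_one_pos[of n t "k-1"] by auto
  moreover have "(t k)\<^sup>2 \<le> (t(0 := 1)) (k-1) * t (k+1)"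
    using assms unfolding D_def by (cases "k = 1") (auto simp: numeral_2_eq_2)
  ultimately show ?thesis
    using assms(2) ratio_le[of "t k" "t (k+1)" "(t(0 := 1)) (k-1)"] unfolding ratio_def by simp
qed

theorem proposition3p3:
  fixes n :: nat and a b :: "nat \<Rightarrow> real"
  assumes "n \<ge> 2"
    and "a \<in> D n" and "b \<in> D n"
    and "\<forall>i\<in>{1..n}. a i \<le> b i"
  shows "f n a \<ge> f n b \<and> (f n a = f n b \<longleftrightarrow> (\<forall>i\<in>{1..n}. a i = b i))"
proof -
  define u where "u = (\<lambda>j. (a(0 := 1)) j / (b(0 := 1)) j)"
  have u0: "u 0 = 1" unfolding u_def by simp
  have u: "\<forall>j\<le>n. 0 < u j \<and> u j \<le> 1"
    using D_pos[OF assms(2)] D_pos[OF assms(3)] assms(4) unfolding u_def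
    by (auto simp: divide_le_eq_1 gr0_conv_Suc)
  have u_one_iff: "(\<forall>j\<in>{1..n}. u j = 1) \<longleftrightarrow> (\<forall>i\<in>{1..n}. a i = b i)"
    using D_pos[OF assms(3)] unfolding u_def by (auto simp: less_imp_neq[symmetric])
  have diff: "f n a - f n b = (\<Sum>j=1..n. ratio b j * (u (j-1) / u j - 1))"
    unfolding u_def using assms(1) D_pos[OF assms(2)] D_pos[OF assms(3)]
    by (intro f_diff_eq_weighted_ratio_sum) auto
  have "\<forall>j\<in>{1..n}. ratio b j > 0" "\<forall>k\<in>{1..<n}. ratio b (k+1) \<le> ratio b k"
    using D_ratio_pos[OF assms(3)] D_ratio_antimono[OF assms(3)] by blast+
  note ratio_sum = weighted_ratio_sum_nonneg[OF u0 u this]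
  have "f n a = f n b \<longleftrightarrow> f n a - f n b = 0" by simp
  also have "\<dots> \<longleftrightarrow> (\<forall>j\<in>{1..n}. u j = 1)" unfolding diff by (rule ratio_sum(2))
  finally show ?thesis using diff ratio_sum(1) u_one_iff by simp
qed

end
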